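(* Let $v_1,\dots,v_m$ be nonzero vectors spanning $\mathbb{R}^n$ and $N_m=\{1,\dots,m\}$. Define the relation $\bowtie$ on $N_m$ by: $i\bowtie j$ iff there exists $K\subset N_m$ of cardinality $n-1$ such that both $(v_i,(v_k)_{k\in K})$ and $(v_j,(v_k)_{k\in K})$ are bases of $\mathbb{R}^n$. Let $\sim$ be the transitive completion of $\bowtie$ ($i\sim j$ iff there is a finite chain from $i$ to $j$ in which consecutive elements are related by $\bowtie$). Then $\sim$ is an equivalence relation, the partition $C$ of $N_m$ into $\sim$-equivalence classes is an adapted partition, and $C$ is finer than every adapted partition (every class of $C$ is contained in some block of any adapted partition).
   Context: For $K\subset N_m$, $E_K$ denotes the linear span of $(v_k)_{k\in K}$. An adapted partition is a partition $S$ of $N_m$ such that $\mathbb{R}^n=\bigoplus_{K\in S}E_K$ (direct sum). *)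

theory Defs
  imports "HOL-Analysis.Analysis" "HOL-Library.Disjoint_Sets"
begin

definition basis_family :: "(nat \<Rightarrow> real^'n) \<Rightarrow> nat set \<Rightarrow> bool" where
  "basis_family v I \<longleftrightarrow> inj_on v I \<and> independent (v ` I) \<and> span (v ` I) = UNIV"

definition E :: "(nat \<Rightarrow> real^'n) \<Rightarrow> nat set \<Rightarrow> (real^'n) set" where
  "E v K = span (v ` K)"

text \<open>i bowtie j on N_m = {1..m}: some K of cardinality n-1 such that both
  (v_i,(v_k)_{k in K}) and (v_j,(v_k)_{k in K}) are bases (as families, so i,j not in K).\<close>
definition bowtie :: "(nat \<Rightarrow> real^'n) \<Rightarrow> nat \<Rightarrow> nat \<Rightarrow> nat \<Rightarrow> bool" where
  "bowtie v m i j \<longleftrightarrow> i \<in> {1..m} \<and> j \<in> {1..m} \<and>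
     (\<exists>K \<subseteq> {1..m}. card K = CARD('n) - 1 \<and> i \<notin> K \<and> j \<notin> K \<and>
        basis_family v (insert i K) \<and> basis_family v (insert j K))"

definition sim :: "(nat \<Rightarrow> real^'n) \<Rightarrow> nat \<Rightarrow> nat \<Rightarrow> nat \<Rightarrow> bool" where
  "sim v m = (bowtie v m)\<^sup>+\<^sup>+"

definition direct_sum :: "(nat \<Rightarrow> real^'n) \<Rightarrow> nat set set \<Rightarrow> bool" where
  "direct_sum v S \<longleftrightarrow> (\<forall>x. \<exists>!f. (\<forall>K\<in>S. f K \<in> E v K) \<and> (\<forall>K. K \<notin> S \<longrightarrow> f K = 0)
                                   \<and> x = (\<Sum>K\<in>S. f K))"

definition adapted_partition :: "(nat \<Rightarrow> real^'n) \<Rightarrow> nat \<Rightarrow> nat set set \<Rightarrow> bool" where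
  "adapted_partition v m S \<longleftrightarrow> partition_on {1..m} S \<and> direct_sum v S"

end

theory Submission
  imports Defs
begin

text \<open>Extract from the family a basis \<open>(v k)\<close>, \<open>k \<in> B\<close>. If \<open>v j\<close> has a nonzero
  coordinate on \<open>v k\<close>, exchanging \<open>v k\<close> for \<open>v j\<close> yields again a basis, so \<open>j \<bowtie> k\<close>.
  Hence every \<open>v j\<close> lies in the span of the basis vectors of its own class, and since the
  classes partition \<open>B\<close>, the spaces \<open>E c\<close> form a direct sum. Conversely, if \<open>i \<bowtie> j\<close> via
  \<open>K\<close>, then \<open>v j\<close> has a nonzero coordinate on \<open>v i\<close> in the basis indexed by \<open>insert i K\<close>;
  splitting this expansion along the blocks of an adapted partition and comparing it with
  the trivial decomposition of \<open>v j\<close> inside its own block puts \<open>i\<close> and \<open>j\<close> in the same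
  block.\<close>

lemma span_image_sumE:
  fixes v :: "'b \<Rightarrow> 'a::real_vector"
  assumes "inj_on v I" "finite I" "x \<in> span (v ` I)"
  obtains a where "x = (\<Sum>k\<in>I. a k *\<^sub>R v k)"
proof -
  from assms(2,3) obtain u where "x = (\<Sum>w\<in>v ` I. u w *\<^sub>R w)"
    using span_finite[of "v ` I"] by auto
  also have "\<dots> = (\<Sum>k\<in>I. u (v k) *\<^sub>R v k)"
    using sum.reindex[OF assms(1)] by simp
  finally show ?thesis by (rule that)
qed

lemma sum_scaleR_in_span_image: "(\<Sum>k\<in>I. a k *\<^sub>R v k) \<in> span (v ` I)"
  by (intro span_sum span_scale span_base) auto

lemma independent_image_coefficient_eq_0:
  fixes v :: "'b \<Rightarrow> 'a::euclidean_space"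
  assumes inj: "inj_on v I" and ind: "independent (v ` I)"
    and zero: "(\<Sum>k\<in>I. a k *\<^sub>R v k) = 0" and k: "k \<in> I"
  shows "a k = 0"
proof -
  let ?c = "\<lambda>w. a (inv_into I v w)"
  have "(\<Sum>w\<in>v ` I. ?c w *\<^sub>R w) = (\<Sum>k\<in>I. a k *\<^sub>R v k)"
    using inj by (simp add: sum.reindex)
  then have "?c (v k) = 0"
    using ind k zero unfolding independent_explicit by auto
  then show ?thesis
    using inj k by simp
qed

lemma coefficient_eq_0_iff_in_span:
  fixes v :: "'b \<Rightarrow> 'a::euclidean_space"
  assumes inj: "inj_on v B" and ind: "independent (v ` B)" and fin: "finite B"
    and x: "x = (\<Sum>l\<in>B. a l *\<^sub>R v l)" and k: "k \<in> B"
  shows "a k = 0 \<longleftrightarrow> x \<in> span (v ` (B - {k}))"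
proof
  assume "a k = 0"
  then have "x = (\<Sum>l\<in>B - {k}. a l *\<^sub>R v l)"
    using x fin k by (simp add: sum.remove)
  then show "x \<in> span (v ` (B - {k}))"
    by (simp add: sum_scaleR_in_span_image)
next
  assume "x \<in> span (v ` (B - {k}))"
  then obtain b where b: "x = (\<Sum>l\<in>B - {k}. b l *\<^sub>R v l)"
    using span_image_sumE[OF inj_on_diff[OF inj]] fin by blast
  also have "\<dots> = (\<Sum>l\<in>B. (b(k := 0)) l *\<^sub>R v l)"
    using fin k by (simp add: sum.remove)
  finally have "(\<Sum>l\<in>B. (a l - (b(k := 0)) l) *\<^sub>R v l) = 0"
    using x by (simp add: scaleR_diff_left sum_subtractf)
  then show "a k = 0"
    using independent_image_coefficient_eq_0[OF inj ind _ k, of "\<lambda>l. a l - (b(k := 0)) l"] by simp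
qed

lemma sum_partition_on_Int:
  assumes "partition_on A P" "finite A" "J \<subseteq> A"
  shows "(\<Sum>X\<in>P. \<Sum>k\<in>J \<inter> X. g k) = (\<Sum>k\<in>J. g k)"
proof -
  let ?g = "\<lambda>k. if k \<in> J then g k else 0"
  have "(\<Sum>k\<in>J \<inter> X. g k) = (\<Sum>k\<in>X. ?g k)" if "X \<in> P" for X
  proof -
    have "finite X"
      using assms(1,2) that by (metis partition_onD1 Union_upper finite_subset)
    then show ?thesis
      unfolding Int_commute[of J X] by (rule sum.inter_restrict)
  qed
  then have "(\<Sum>X\<in>P. \<Sum>k\<in>J \<inter> X. g k) = (\<Sum>X\<in>P. \<Sum>k\<in>X. ?g k)"
    by (rule sum.cong[OF refl])
  also have "\<dots> = (\<Sum>k\<in>A. ?g k)"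
    by (rule sum.partition[OF assms(2,1), symmetric])
  also have "\<dots> = (\<Sum>k\<in>J. g k)"
    using sum.inter_restrict[OF assms(2), of g J] assms(3) by (simp add: Int_absorb1)
  finally show ?thesis .
qed

lemma independent_partition_span_sum_eq_0:
  fixes v :: "'b \<Rightarrow> 'a::euclidean_space"
  assumes inj: "inj_on v B" and ind: "independent (v ` B)" and B: "B \<subseteq> A"
    and A: "finite A" "partition_on A P"
    and g: "\<forall>c\<in>P. g c \<in> span (v ` (B \<inter> c))" and g0: "(\<Sum>c\<in>P. g c) = 0"
  shows "\<forall>c\<in>P. g c = 0"
proof -
  have fin: "finite B"
    using A(1) B by (rule finite_subset[rotated])
  have "\<forall>c\<in>P. \<exists>b. g c = (\<Sum>k\<in>B \<inter> c. b k *\<^sub>R v k)"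
  proof
    fix c
    assume "c \<in> P"
    then obtain b where "g c = (\<Sum>k\<in>B \<inter> c. b k *\<^sub>R v k)"
      using g span_image_sumE[OF inj_on_subset[OF inj Int_lower1] finite_subset[OF Int_lower1 fin]]
      by blast
    then show "\<exists>b. g c = (\<Sum>k\<in>B \<inter> c. b k *\<^sub>R v k)"
      by blast
  qed
  then obtain b where b: "\<forall>c\<in>P. g c = (\<Sum>k\<in>B \<inter> c. b c k *\<^sub>R v k)"
    by (rule bchoice[THEN exE])
  define a where "a k = b (THE c. c \<in> P \<and> k \<in> c) k" for k
  have "(THE c'. c' \<in> P \<and> k \<in> c') = c" if "c \<in> P" "k \<in> c" for c k
    using that partition_onD2[OF A(2)] by (intro the_equality) (auto dest: disjointD)
  then have ga: "g c = (\<Sum>k\<in>B \<inter> c. a k *\<^sub>R v k)" if "c \<in> P" for c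
    using b that unfolding a_def by (auto intro: sum.cong)
  have "(\<Sum>k\<in>B. a k *\<^sub>R v k) = 0"
    using sum_partition_on_Int[OF A(2,1) B, of "\<lambda>k. a k *\<^sub>R v k"] ga g0 by simp
  then have "\<forall>k\<in>B. a k = 0"
    using independent_image_coefficient_eq_0[OF inj ind] by blast
  then show ?thesis
    using ga by simp
qed

lemma basis_family_card:
  fixes v :: "nat \<Rightarrow> real^'n"
  assumes "basis_family v B"
  shows "finite B" "card B = CARD('n)"
proof -
  have inj: "inj_on v B" and ind: "independent (v ` B)" and sp: "span (v ` B) = UNIV"
    using assms unfolding basis_family_def by auto
  show "finite B"
    using ind inj finiteI_independent finite_imageD by blast
  have "card B = dim (span (v ` B))"
    using card_image[OF inj] dim_span_eq_card_independent[OF ind] by simp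
  then show "card B = CARD('n)"
    using sp by simp
qed

lemma basis_family_exchange:
  fixes v :: "nat \<Rightarrow> real^'n"
  assumes B: "basis_family v B" and k: "k \<in> B" and j: "v j \<notin> span (v ` (B - {k}))"
  shows "basis_family v (insert j (B - {k}))"
proof -
  let ?K = "B - {k}"
  have inj: "inj_on v B" and ind: "independent (v ` B)"
    using B unfolding basis_family_def by auto
  have fin: "finite B" and card: "card B = CARD('n)"
    using basis_family_card[OF B] by auto
  have "v j \<notin> v ` ?K"
    using j span_base by metis
  then have inj': "inj_on v (insert j ?K)" and j': "j \<notin> ?K"
    using inj_on_diff[OF inj] by auto
  have ind': "independent (v ` insert j ?K)"
    using independent_mono[OF ind, of "v ` ?K"] j by (simp add: independent_insert image_mono)
  have "card (v ` insert j ?K) = CARD('n)"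
    using card_image[OF inj'] j' fin card k by (simp add: card_Suc_Diff1)
  then have "span (v ` insert j ?K) = UNIV"
    using card_eq_dim[of "v ` insert j ?K" UNIV] ind' fin by auto
  then show ?thesis
    unfolding basis_family_def using inj' ind' by blast
qed

lemma basis_family_extend:
  fixes v :: "nat \<Rightarrow> real^'n"
  assumes sp: "span (v ` A) = UNIV" and J: "J \<subseteq> A" "inj_on v J" "independent (v ` J)"
  obtains B where "J \<subseteq> B" "B \<subseteq> A" "basis_family v B"
proof -
  obtain W where W: "v ` J \<subseteq> W" "W \<subseteq> v ` A" "independent W" "v ` A \<subseteq> span W"
    using maximal_independent_subset_extend[of "v ` J" "v ` A"] J by blast
  have "span W = UNIV"
    using span_minimal[OF W(4) subspace_span] sp by auto
  have "W - v ` J \<subseteq> v ` A"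
    using W(2) by blast
  obtain C where C: "C \<subseteq> A" "inj_on v C" "v ` C = W - v ` J"
    using subset_image_inj[THEN iffD1, OF \<open>W - v ` J \<subseteq> v ` A\<close>] by blast
  have "v ` (J \<union> C) = W"
    using C(3) W(1) by blast
  moreover have "inj_on v (J \<union> C)"
    using J(2) C(2,3) by (simp add: inj_on_Un) blast
  ultimately have "basis_family v (J \<union> C)"
    unfolding basis_family_def using W(3) \<open>span W = UNIV\<close> by simp
  then show ?thesis
    using that C(1) J(1) by blast
qed

lemma direct_sumI:
  assumes "\<And>x. \<exists>f. (\<forall>K\<in>S. f K \<in> E v K) \<and> x = (\<Sum>K\<in>S. f K)"
    and "\<And>g. \<forall>K\<in>S. g K \<in> E v K \<Longrightarrow> (\<Sum>K\<in>S. g K) = 0 \<Longrightarrow> \<forall>K\<in>S. g K = 0"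
  shows "direct_sum v S"
  unfolding direct_sum_def
proof
  fix x
  obtain f where f: "\<forall>K\<in>S. f K \<in> E v K" "x = (\<Sum>K\<in>S. f K)"
    using assms(1) by blast
  let ?f = "\<lambda>K. if K \<in> S then f K else 0"
  show "\<exists>!f. (\<forall>K\<in>S. f K \<in> E v K) \<and> (\<forall>K. K \<notin> S \<longrightarrow> f K = 0) \<and> x = (\<Sum>K\<in>S. f K)"
  proof (rule ex1I[of _ ?f])
    show "(\<forall>K\<in>S. ?f K \<in> E v K) \<and> (\<forall>K. K \<notin> S \<longrightarrow> ?f K = 0) \<and> x = (\<Sum>K\<in>S. ?f K)"
      using f by simp
  next
    fix h
    assume h: "(\<forall>K\<in>S. h K \<in> E v K) \<and> (\<forall>K. K \<notin> S \<longrightarrow> h K = 0) \<and> x = (\<Sum>K\<in>S. h K)"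
    have "\<forall>K\<in>S. h K - ?f K = 0"
    proof (rule assms(2))
      show "\<forall>K\<in>S. h K - ?f K \<in> E v K"
        using h f unfolding E_def by (simp add: span_diff)
      show "(\<Sum>K\<in>S. h K - ?f K) = 0"
        using h f by (simp add: sum_subtractf)
    qed
    then show "h = ?f"
      using h by fastforce
  qed
qed

lemma direct_sum_basis_partition:
  fixes v :: "nat \<Rightarrow> real^'n"
  assumes B: "basis_family v B" "B \<subseteq> A" and A: "finite A" "partition_on A P"
    and classes: "\<And>c. c \<in> P \<Longrightarrow> v ` c \<subseteq> span (v ` (B \<inter> c))"
  shows "direct_sum v P"
proof (rule direct_sumI)
  have inj: "inj_on v B" and ind: "independent (v ` B)" and sp: "span (v ` B) = UNIV"
    using B(1) unfolding basis_family_def by auto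
  have E_eq: "E v c = span (v ` (B \<inter> c))" if "c \<in> P" for c
  proof
    show "E v c \<subseteq> span (v ` (B \<inter> c))"
      unfolding E_def using classes[OF that] by (intro span_minimal subspace_span)
    show "span (v ` (B \<inter> c)) \<subseteq> E v c"
      unfolding E_def by (intro span_mono image_mono) blast
  qed
  show "\<exists>f. (\<forall>c\<in>P. f c \<in> E v c) \<and> x = (\<Sum>c\<in>P. f c)" for x
  proof -
    obtain a where a: "x = (\<Sum>k\<in>B. a k *\<^sub>R v k)"
      using span_image_sumE[OF inj basis_family_card(1)[OF B(1)]] sp by blast
    have "\<forall>c\<in>P. (\<Sum>k\<in>B \<inter> c. a k *\<^sub>R v k) \<in> E v c"
      by (auto simp: E_eq intro: sum_scaleR_in_span_image)
    moreover have "x = (\<Sum>c\<in>P. \<Sum>k\<in>B \<inter> c. a k *\<^sub>R v k)"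
      unfolding a by (rule sum_partition_on_Int[OF A(2,1) B(2), symmetric])
    ultimately show ?thesis
      by (intro exI[of _ "\<lambda>c. \<Sum>k\<in>B \<inter> c. a k *\<^sub>R v k"]) simp
  qed
  show "\<forall>c\<in>P. g c = 0" if "\<forall>c\<in>P. g c \<in> E v c" "(\<Sum>c\<in>P. g c) = 0" for g
    using independent_partition_span_sum_eq_0[OF inj ind B(2) A, of g] that E_eq by simp
qed

lemma direct_sum_unique:
  assumes ds: "direct_sum v S"
    and f: "\<forall>K\<in>S. f K \<in> E v K" "\<forall>K. K \<notin> S \<longrightarrow> f K = 0"
    and g: "\<forall>K\<in>S. g K \<in> E v K" "\<forall>K. K \<notin> S \<longrightarrow> g K = 0"
    and eq: "(\<Sum>K\<in>S. f K) = (\<Sum>K\<in>S. g K)"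
  shows "f = g"
proof -
  have "\<exists>!h. (\<forall>K\<in>S. h K \<in> E v K) \<and> (\<forall>K. K \<notin> S \<longrightarrow> h K = 0) \<and> (\<Sum>K\<in>S. f K) = (\<Sum>K\<in>S. h K)"
    using ds unfolding direct_sum_def by (rule spec)
  then show ?thesis
    using f g eq by (elim ex1E) (metis (no_types, lifting))
qed

lemma direct_sum_component_eq_0:
  assumes ds: "direct_sum v S" and fin: "finite S" and Y: "Y \<in> S" "x \<in> E v Y"
    and f: "\<forall>K\<in>S. f K \<in> E v K" "x = (\<Sum>K\<in>S. f K)" and X: "X \<in> S" "X \<noteq> Y"
  shows "f X = 0"
proof -
  let ?f = "\<lambda>K. if K \<in> S then f K else 0"
  let ?y = "\<lambda>K. if K = Y then x else 0"
  have "?f = ?y"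
  proof (rule direct_sum_unique[OF ds])
    show "\<forall>K\<in>S. ?y K \<in> E v K"
      using Y unfolding E_def by (simp add: span_zero)
    show "(\<Sum>K\<in>S. ?f K) = (\<Sum>K\<in>S. ?y K)"
      using f(2) Y(1) fin by simp
  qed (use f(1) Y(1) in auto)
  then show ?thesis
    using fun_cong[of ?f ?y X] X by simp
qed

lemma direct_sum_expansion_coefficient_eq_0:
  fixes v :: "nat \<Rightarrow> real^'n"
  assumes ds: "direct_sum v S" and A: "finite A" "partition_on A S"
    and I: "I \<subseteq> A" "inj_on v I" "independent (v ` I)"
    and x: "x = (\<Sum>k\<in>I. a k *\<^sub>R v k)" "x \<in> E v Y" "Y \<in> S"
    and k: "k \<in> I" "k \<in> X" "X \<in> S" "X \<noteq> Y"
  shows "a k = 0"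
proof -
  have decomp: "x = (\<Sum>Z\<in>S. \<Sum>l\<in>I \<inter> Z. a l *\<^sub>R v l)"
    unfolding x(1) by (rule sum_partition_on_Int[OF A(2,1) I(1), symmetric])
  have parts: "\<forall>Z\<in>S. (\<Sum>l\<in>I \<inter> Z. a l *\<^sub>R v l) \<in> E v Z"
  proof
    fix Z
    have "span (v ` (I \<inter> Z)) \<subseteq> span (v ` Z)"
      by (intro span_mono image_mono) blast
    then show "(\<Sum>l\<in>I \<inter> Z. a l *\<^sub>R v l) \<in> E v Z"
      unfolding E_def using sum_scaleR_in_span_image by blast
  qed
  have "(\<Sum>l\<in>I \<inter> X. a l *\<^sub>R v l) = 0"
    using direct_sum_component_eq_0[OF ds finite_elements[OF A] x(3,2) parts decomp k(3,4)] .
  moreover have "inj_on v (I \<inter> X)"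
    using I(2) by (rule inj_on_subset) blast
  moreover have "independent (v ` (I \<inter> X))"
    using I(3) by (rule independent_mono) blast
  ultimately show "a k = 0"
    using independent_image_coefficient_eq_0[of v "I \<inter> X" a k] k(1,2) by simp
qed

lemma bowtie_sym: "bowtie v m i j \<Longrightarrow> bowtie v m j i"
  unfolding bowtie_def by blast

lemma bowtie_if_exchange:
  fixes v :: "nat \<Rightarrow> real^'n"
  assumes B: "basis_family v B" "B \<subseteq> {1..m}" and j: "j \<in> {1..m}" and k: "k \<in> B"
    and nsp: "v j \<notin> span (v ` (B - {k}))"
  shows "bowtie v m j k"
proof -
  let ?K = "B - {k}"
  have "j \<notin> ?K"
    using nsp span_base by (metis image_eqI)
  moreover have "card ?K = CARD('n) - 1"
    using basis_family_card[OF B(1)] k by simp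
  moreover have "insert k ?K = B"
    using k by blast
  ultimately have "?K \<subseteq> {1..m} \<and> card ?K = CARD('n) - 1 \<and> j \<notin> ?K \<and> k \<notin> ?K
      \<and> basis_family v (insert j ?K) \<and> basis_family v (insert k ?K)"
    using B basis_family_exchange[OF B(1) k nsp] by auto
  then show ?thesis
    unfolding bowtie_def using B(2) j k by blast
qed

lemma bowtie_refl:
  fixes v :: "nat \<Rightarrow> real^'n"
  assumes "v i \<noteq> 0" "span (v ` {1..m}) = UNIV" "i \<in> {1..m}"
  shows "bowtie v m i i"
proof -
  obtain B where B: "{i} \<subseteq> B" "B \<subseteq> {1..m}" "basis_family v B"
    using basis_family_extend[of v "{1..m}" "{i}"] assms by auto
  have "independent (v ` B)" "inj_on v B"
    using B(3) unfolding basis_family_def by auto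
  moreover have "v ` (B - {i}) = v ` B - {v i}"
    using B(1) \<open>inj_on v B\<close> by (auto simp: inj_on_def)
  ultimately have "v i \<notin> span (v ` (B - {i}))"
    using B(1) by (metis dependent_def imageI insert_subset)
  then show ?thesis
    using bowtie_if_exchange[OF B(3,2) assms(3)] B(1) by blast
qed

lemma equiv_sim:
  fixes v :: "nat \<Rightarrow> real^'n"
  assumes "\<forall>i\<in>{1..m}. v i \<noteq> 0" "span (v ` {1..m}) = UNIV"
  shows "equiv {1..m} {(i, j). sim v m i j}"
proof -
  have sim_eq: "{(i, j). sim v m i j} = {(i, j). bowtie v m i j}\<^sup>+"
    unfolding sim_def by (simp add: tranclp_unfold)
  have "{(i, j). bowtie v m i j} \<subseteq> {1..m} \<times> {1..m}"
    unfolding bowtie_def by blast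
  then have "{(i, j). sim v m i j} \<subseteq> {1..m} \<times> {1..m}"
    unfolding sim_eq by (metis trancl_subset_Sigma)
  moreover have "(i, i) \<in> {(i, j). sim v m i j}" if "i \<in> {1..m}" for i
    using bowtie_refl[of v i m] assms that unfolding sim_def by auto
  moreover have "sym {(i, j). sim v m i j}"
    unfolding sim_eq by (rule sym_trancl) (auto simp: sym_def intro: bowtie_sym)
  moreover have "trans {(i, j). sim v m i j}"
    unfolding sim_eq by (rule trans_trancl)
  ultimately show ?thesis
    unfolding equiv_def refl_on_def by blast
qed

lemma in_span_bowtie_basis:
  fixes v :: "nat \<Rightarrow> real^'n"
  assumes B: "basis_family v B" "B \<subseteq> {1..m}" and j: "j \<in> {1..m}"
  shows "v j \<in> span (v ` {k \<in> B. bowtie v m j k})"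
proof -
  have inj: "inj_on v B" and ind: "independent (v ` B)" and sp: "span (v ` B) = UNIV"
    using B(1) unfolding basis_family_def by auto
  have fin: "finite B"
    using basis_family_card[OF B(1)] by simp
  obtain a where a: "v j = (\<Sum>k\<in>B. a k *\<^sub>R v k)"
    using span_image_sumE[OF inj fin] sp by blast
  have "bowtie v m j k" if "k \<in> B" "a k \<noteq> 0" for k
    using that coefficient_eq_0_iff_in_span[OF inj ind fin a, of k] bowtie_if_exchange[OF B j, of k]
    by simp
  then have "(\<Sum>k\<in>B. a k *\<^sub>R v k) = (\<Sum>k\<in>{k \<in> B. bowtie v m j k}. a k *\<^sub>R v k)"
    by (intro sum.mono_neutral_right[OF fin]) auto
  then have "v j = (\<Sum>k\<in>{k \<in> B. bowtie v m j k}. a k *\<^sub>R v k)"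
    using a by simp
  then show ?thesis
    by (simp add: sum_scaleR_in_span_image)
qed

lemma in_span_sim_class:
  fixes v :: "nat \<Rightarrow> real^'n"
  assumes B: "basis_family v B" "B \<subseteq> {1..m}"
    and c: "c \<in> {1..m} // {(i, j). sim v m i j}" and j: "j \<in> c"
  shows "v j \<in> span (v ` (B \<inter> c))"
proof -
  obtain i where i: "c = {(i, j). sim v m i j} `` {i}"
    using c by (rule quotientE)
  then have "sim v m i j"
    using j by blast
  then have "j \<in> {1..m}"
    unfolding sim_def by (induction rule: tranclp_induct) (simp_all add: bowtie_def)
  then have "v j \<in> span (v ` {k \<in> B. bowtie v m j k})"
    by (rule in_span_bowtie_basis[OF B])
  moreover have "{k \<in> B. bowtie v m j k} \<subseteq> B \<inter> c"
    using i j unfolding sim_def by (auto intro: tranclp.trancl_into_trancl)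
  then have "span (v ` {k \<in> B. bowtie v m j k}) \<subseteq> span (v ` (B \<inter> c))"
    by (intro span_mono image_mono)
  ultimately show ?thesis
    by blast
qed

lemma adapted_partition_bowtie_block:
  fixes v :: "nat \<Rightarrow> real^'n"
  assumes ap: "adapted_partition v m S" and bt: "bowtie v m i j" and X: "X \<in> S" "i \<in> X"
  shows "j \<in> X"
proof (rule ccontr)
  assume "j \<notin> X"
  have part: "partition_on {1..m} S" and ds: "direct_sum v S"
    using ap unfolding adapted_partition_def by auto
  obtain K where K: "K \<subseteq> {1..m}" "i \<notin> K" "j \<notin> K"
    "basis_family v (insert i K)" "basis_family v (insert j K)"
    using bt unfolding bowtie_def by blast
  let ?I = "insert i K"
  have inj: "inj_on v ?I" and ind: "independent (v ` ?I)" and sp: "span (v ` ?I) = UNIV"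
    using K(4) unfolding basis_family_def by auto
  have fin: "finite ?I"
    using basis_family_card[OF K(4)] by simp
  obtain a where a: "v j = (\<Sum>k\<in>?I. a k *\<^sub>R v k)"
    using span_image_sumE[OF inj fin] sp by blast
  have "v j \<notin> span (v ` K)"
    using K(3,5) unfolding basis_family_def by (simp add: independent_insert)
  then have "a i \<noteq> 0"
    using coefficient_eq_0_iff_in_span[OF inj ind fin a] K(2) by simp
  moreover obtain Y where Y: "Y \<in> S" "j \<in> Y"
    using part bt unfolding bowtie_def by (metis partition_onD1 UnionE)
  moreover have "?I \<subseteq> {1..m}"
    using K(1) bt unfolding bowtie_def by blast
  moreover have "v j \<in> E v Y"
    unfolding E_def using Y(2) by (simp add: span_base)
  moreover have "X \<noteq> Y"
    using Y(2) \<open>j \<notin> X\<close> by blast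
  ultimately show False
    using direct_sum_expansion_coefficient_eq_0[OF ds finite_atLeastAtMost part _ inj ind a _ _
        insertI1 X(2,1)] by blast
qed

lemma sim_class_subset_block:
  fixes v :: "nat \<Rightarrow> real^'n"
  assumes ap: "adapted_partition v m S" and c: "c \<in> {1..m} // {(i, j). sim v m i j}"
  shows "\<exists>X\<in>S. c \<subseteq> X"
proof -
  obtain i where i: "c = {(i, j). sim v m i j} `` {i}" "i \<in> {1..m}"
    using c by (rule quotientE)
  then obtain X where X: "X \<in> S" "i \<in> X"
    using ap partition_onD1 unfolding adapted_partition_def by blast
  have "j \<in> X" if "sim v m i j" for j
    using that unfolding sim_def
  proof (induction rule: tranclp_induct)
    case (base j)
    then show ?case
      using adapted_partition_bowtie_block[OF ap _ X] by blast
  next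
    case (step j k)
    then show ?case
      using adapted_partition_bowtie_block[OF ap _ X(1)] by blast
  qed
  then show ?thesis
    using X(1) i(1) by blast
qed

theorem proposition1:
  fixes v :: "nat \<Rightarrow> real^'n" and m :: nat
  assumes nonzero: "\<forall>i\<in>{1..m}. v i \<noteq> 0"
    and spans: "span (v ` {1..m}) = UNIV"
  shows "equiv {1..m} {(i, j). sim v m i j}
    \<and> adapted_partition v m ({1..m} // {(i, j). sim v m i j})
    \<and> (\<forall>S. adapted_partition v m S \<longrightarrow>
          (\<forall>c \<in> {1..m} // {(i, j). sim v m i j}. \<exists>B\<in>S. c \<subseteq> B))"
proof -
  let ?R = "{(i, j). sim v m i j}"
  have equiv: "equiv {1..m} ?R"
    using nonzero spans by (rule equiv_sim)
  have partition: "partition_on {1..m} ({1..m} // ?R)"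
    using equiv by (rule partition_on_quotient)
  obtain B where B: "B \<subseteq> {1..m}" "basis_family v B"
    by (rule basis_family_extend[OF spans empty_subsetI]) (auto simp: independent_empty)
  have "direct_sum v ({1..m} // ?R)"
    using in_span_sim_class[OF B(2,1)]
    by (intro direct_sum_basis_partition[OF B(2,1) finite_atLeastAtMost partition]) blast
  moreover have "\<forall>S. adapted_partition v m S \<longrightarrow> (\<forall>c \<in> {1..m} // ?R. \<exists>X\<in>S. c \<subseteq> X)"
    using sim_class_subset_block by blast
  ultimately show ?thesis
    unfolding adapted_partition_def using equiv partition by blast
qed

end
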